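(* Let $m\in\mathbb{N}$. If $S\subseteq\mathbb{N}^{\mathbb{N}}$ is $m$th-order guessable, then $S$ is in $\mathbf{\Delta}'_{m+2}$. More precisely, $S$ is a countable union of countable intersections, and also a countable intersection of countable unions, of sets that are $\mathbf{\Delta}^0_m$ if $m>0$ and clopen if $m=0$.
   Context: Baire space $\mathbb{N}^{\mathbb{N}}$ carries the product of discrete topologies; $\mathbf{\Sigma}^0_n,\mathbf{\Pi}^0_n,\mathbf{\Delta}^0_n$ are the boldface Borel pointclasses. Definition: $\mathbf{\Delta}'_2=\mathbf{\Delta}^0_2$; for $k>2$, $S\in\mathbf{\Delta}'_k$ iff $S$ is a countable union of countable intersections of $\mathbf{\Delta}^0_{k-2}$ sets and also a countable intersection of countable unions of $\mathbf{\Delta}^0_{k-2}$ sets. The language $\mathscr{L}_{\max}$ is the first-order language (with equality) having: a constant symbol $\overline{n}$ for each $n\in\mathbb{N}$; an $n$-ary function symbol $\tilde w$ for each $w:\mathbb{N}^n\to\mathbb{N}$; an $n$-ary predicate symbol $\tilde p$ for each $p\subseteq\mathbb{N}^n$; a special unary function symbol $\mathbf{f}$; and, for every $n$ and every $G:\mathbb{N}^n\times\mathbb{N}^{<\mathbb{N}}\to\mathbb{N}$, an $(n+1)$-ary function symbol $G\circ\mathbf{f}$. For $f\in\mathbb{N}^{\mathbb{N}}$, $\mathscr{M}_f$ is the structure with universe $\mathbb{N}$ interpreting $\overline n$ as $n$, $\tilde w$ as $w$, $\tilde p$ as $p$, $\mathbf f$ as $f$, and $G\circ\mathbf f$ as $(m_1,\dots,m_n,m)\mapsto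 G(m_1,\dots,m_n,f(0),\dots,f(m))$. For a sentence $\phi$, $f(\phi)=1$ if $\mathscr{M}_f\models\phi$ and $f(\phi)=0$ otherwise. Formula classes: "quantifier-free" means containing no quantifiers at all (not even bounded ones). $\Sigma_0=\Pi_0=\Delta_0$ is the set of quantifier-free formulas; $\Sigma_{n+1}=\{\exists x\,\phi:\phi\in\Pi_n\}$ and $\Pi_{n+1}=\{\forall x\,\phi:\phi\in\Sigma_n\}$; a formula is $\Delta_{n+1}$ if it is equivalent, in every structure $\mathscr{M}_f$ ($f\in\mathbb{N}^{\mathbb{N}}$), to some $\Sigma_{n+1}$ formula of $\mathscr{L}_{\max}$ and also to some $\Pi_{n+1}$ formula of $\mathscr{L}_{\max}$. For a set $\Sigma$ of symbols of $\mathscr{L}_{\max}$, a sentence "of $\mathscr{L}_{\max}\cap\Sigma$" is an $\mathscr{L}_{\max}$-sentence all of whose non-logical symbols lie in $\Sigma$. Definition ($m$th-order guessable): $S\subseteq\mathbb{N}^{\mathbb{N}}$ is $m$th-order guessable if there exist a countable set $\Sigma$ of $\mathscr{L}_{\max}$-symbols, a listing $\phi_0,\phi_1,\dots$ of all $\Delta_m$ sentences of $\mathscr{L}_{\max}\cap\Sigma$, and a function $G:\{0,1\}^{<\mathbb{N}}\to\mathbb{N}$ such that for every $f:\mathbb{N}\to\mathbb{N}$, $\lim_{n\to\infty}G(f(\phi_0),\dots,f(\phi_n))$ equals $1$ if $f\in S$ and $0$ if $f\notin S$. *)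

theory Defs
  imports "HOL-Analysis.Analysis"
begin

section \<open>Boldface Borel pointclasses on Baire space\<close>

text \<open>Baire space: nat \<Rightarrow> nat with the library's product topology (nat carries the discrete topology).\<close>

type_synonym baire = "nat \<Rightarrow> nat"

text \<open>Index n \<ge> 1: sigma0 1 = open sets, pi0 n = complements of sigma0 n,
  sigma0 (n+1) = countable unions of pi0 n sets (i.e. of sets whose complement is in sigma0 n). The value at index 0 is never used.\<close>

primrec sigma0 :: "nat \<Rightarrow> baire set set" where
  "sigma0 0 = {}"
| "sigma0 (Suc n) = (if n = 0 then {A. open A}
                     else {(\<Union>i::nat. A i) | A. \<forall>i::nat. - A i \<in> sigma0 n})"

definition pi0 :: "nat \<Rightarrow> baire set set" where
  "pi0 n = {- A | A. A \<in> sigma0 n}"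

definition delta0 :: "nat \<Rightarrow> baire set set" where
  "delta0 n = sigma0 n \<inter> pi0 n"

definition union_of_inters :: "'a set set \<Rightarrow> 'a set set" where
  "union_of_inters C = {(\<Union>i::nat. \<Inter>j::nat. A i j) | A. \<forall>i j. A i j \<in> C}"

definition inter_of_unions :: "'a set set \<Rightarrow> 'a set set" where
  "inter_of_unions C = {(\<Inter>i::nat. \<Union>j::nat. A i j) | A. \<forall>i j. A i j \<in> C}"

text \<open>The class Delta'_k (only meaningful for k \<ge> 2).\<close>

definition delta' :: "nat \<Rightarrow> baire set set" where
  "delta' k = (if k = 2 then delta0 2
               else if k > 2 then union_of_inters (delta0 (k - 2)) \<inter> inter_of_unions (delta0 (k - 2))
               else {})"

section \<open>The language L_max\<close>

text \<open>Function symbols: the constant n-bar, the n-ary symbol w-tilde for w : N^n \<rightarrow> N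
  (w is given as a function on lists; only its values on lists of length n matter),
  the special unary symbol f, and the (n+1)-ary symbol G o f for
  G : N^n \<times> N^{<N} \<rightarrow> N (given as a function of a list of length n and a finite sequence).\<close>

datatype fsym =
    CNum nat
  | WFun nat "nat list \<Rightarrow> nat"
  | FSpecial
  | GFun nat "nat list \<Rightarrow> nat list \<Rightarrow> nat"

fun farity :: "fsym \<Rightarrow> nat" where
  "farity (CNum k) = 0"
| "farity (WFun n w) = n"
| "farity FSpecial = 1"
| "farity (GFun n G) = Suc n"

text \<open>Predicate symbols p-tilde for p \<subseteq> N^n (p given as a set of lists).\<close>

datatype psym = PSym nat "nat list set"

fun parity :: "psym \<Rightarrow> nat" where
  "parity (PSym n p) = n"

datatype sym = FS fsym | PS psym

datatype trm = Var nat | App fsym "trm list"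

datatype fm =
    Eq trm trm
  | Rel psym "trm list"
  | Neg fm
  | Conj fm fm
  | Disj fm fm
  | Imp fm fm
  | Ex nat fm
  | All nat fm

fun fsym_interp :: "(nat \<Rightarrow> nat) \<Rightarrow> fsym \<Rightarrow> nat list \<Rightarrow> nat" where
  "fsym_interp f (CNum k) xs = k"
| "fsym_interp f (WFun n w) xs = w xs"
| "fsym_interp f FSpecial xs = f (hd xs)"
| "fsym_interp f (GFun n G) xs = G (take n xs) (map f [0..<Suc (xs ! n)])"

fun psym_interp :: "psym \<Rightarrow> nat list \<Rightarrow> bool" where
  "psym_interp (PSym n p) xs = (xs \<in> p)"

fun evalt :: "(nat \<Rightarrow> nat) \<Rightarrow> (nat \<Rightarrow> nat) \<Rightarrow> trm \<Rightarrow> nat" where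
  "evalt f e (Var x) = e x"
| "evalt f e (App s ts) = fsym_interp f s (map (evalt f e) ts)"

fun sat :: "(nat \<Rightarrow> nat) \<Rightarrow> (nat \<Rightarrow> nat) \<Rightarrow> fm \<Rightarrow> bool" where
  "sat f e (Eq t u) = (evalt f e t = evalt f e u)"
| "sat f e (Rel p ts) = psym_interp p (map (evalt f e) ts)"
| "sat f e (Neg \<phi>) = (\<not> sat f e \<phi>)"
| "sat f e (Conj \<phi> \<psi>) = (sat f e \<phi> \<and> sat f e \<psi>)"
| "sat f e (Disj \<phi> \<psi>) = (sat f e \<phi> \<or> sat f e \<psi>)"
| "sat f e (Imp \<phi> \<psi>) = (sat f e \<phi> \<longrightarrow> sat f e \<psi>)"
| "sat f e (Ex x \<phi>) = (\<exists>a. sat f (e(x := a)) \<phi>)"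
| "sat f e (All x \<phi>) = (\<forall>a. sat f (e(x := a)) \<phi>)"

fun wf_trm :: "trm \<Rightarrow> bool" where
  "wf_trm (Var x) = True"
| "wf_trm (App s ts) = (length ts = farity s \<and> (\<forall>t\<in>set ts. wf_trm t))"

fun wf_fm :: "fm \<Rightarrow> bool" where
  "wf_fm (Eq t u) = (wf_trm t \<and> wf_trm u)"
| "wf_fm (Rel p ts) = (length ts = parity p \<and> (\<forall>t\<in>set ts. wf_trm t))"
| "wf_fm (Neg \<phi>) = wf_fm \<phi>"
| "wf_fm (Conj \<phi> \<psi>) = (wf_fm \<phi> \<and> wf_fm \<psi>)"
| "wf_fm (Disj \<phi> \<psi>) = (wf_fm \<phi> \<and> wf_fm \<psi>)"
| "wf_fm (Imp \<phi> \<psi>) = (wf_fm \<phi> \<and> wf_fm \<psi>)"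
| "wf_fm (Ex x \<phi>) = wf_fm \<phi>"
| "wf_fm (All x \<phi>) = wf_fm \<phi>"

fun fv_trm :: "trm \<Rightarrow> nat set" where
  "fv_trm (Var x) = {x}"
| "fv_trm (App s ts) = (\<Union>t\<in>set ts. fv_trm t)"

fun fv :: "fm \<Rightarrow> nat set" where
  "fv (Eq t u) = fv_trm t \<union> fv_trm u"
| "fv (Rel p ts) = (\<Union>t\<in>set ts. fv_trm t)"
| "fv (Neg \<phi>) = fv \<phi>"
| "fv (Conj \<phi> \<psi>) = fv \<phi> \<union> fv \<psi>"
| "fv (Disj \<phi> \<psi>) = fv \<phi> \<union> fv \<psi>"
| "fv (Imp \<phi> \<psi>) = fv \<phi> \<union> fv \<psi>"
| "fv (Ex x \<phi>) = fv \<phi> - {x}"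
| "fv (All x \<phi>) = fv \<phi> - {x}"

fun syms_trm :: "trm \<Rightarrow> sym set" where
  "syms_trm (Var x) = {}"
| "syms_trm (App s ts) = insert (FS s) (\<Union>t\<in>set ts. syms_trm t)"

fun syms :: "fm \<Rightarrow> sym set" where
  "syms (Eq t u) = syms_trm t \<union> syms_trm u"
| "syms (Rel p ts) = insert (PS p) (\<Union>t\<in>set ts. syms_trm t)"
| "syms (Neg \<phi>) = syms \<phi>"
| "syms (Conj \<phi> \<psi>) = syms \<phi> \<union> syms \<psi>"
| "syms (Disj \<phi> \<psi>) = syms \<phi> \<union> syms \<psi>"
| "syms (Imp \<phi> \<psi>) = syms \<phi> \<union> syms \<psi>"
| "syms (Ex x \<phi>) = syms \<phi>"
| "syms (All x \<phi>) = syms \<phi>"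

definition sentence :: "fm \<Rightarrow> bool" where
  "sentence \<phi> \<longleftrightarrow> wf_fm \<phi> \<and> fv \<phi> = {}"

fun qfree :: "fm \<Rightarrow> bool" where
  "qfree (Eq t u) = True"
| "qfree (Rel p ts) = True"
| "qfree (Neg \<phi>) = qfree \<phi>"
| "qfree (Conj \<phi> \<psi>) = (qfree \<phi> \<and> qfree \<psi>)"
| "qfree (Disj \<phi> \<psi>) = (qfree \<phi> \<and> qfree \<psi>)"
| "qfree (Imp \<phi> \<psi>) = (qfree \<phi> \<and> qfree \<psi>)"
| "qfree (Ex x \<phi>) = False"
| "qfree (All x \<phi>) = False"

fun is_Sigma :: "nat \<Rightarrow> fm \<Rightarrow> bool"
and is_Pi :: "nat \<Rightarrow> fm \<Rightarrow> bool" where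
  "is_Sigma 0 \<phi> = qfree \<phi>"
| "is_Sigma (Suc n) \<phi> = (\<exists>x \<psi>. \<phi> = Ex x \<psi> \<and> is_Pi n \<psi>)"
| "is_Pi 0 \<phi> = qfree \<phi>"
| "is_Pi (Suc n) \<phi> = (\<exists>x \<psi>. \<phi> = All x \<psi> \<and> is_Sigma n \<psi>)"

definition equiv_fm :: "fm \<Rightarrow> fm \<Rightarrow> bool" where
  "equiv_fm \<phi> \<psi> \<longleftrightarrow> (\<forall>f e. sat f e \<phi> = sat f e \<psi>)"

fun is_Delta :: "nat \<Rightarrow> fm \<Rightarrow> bool" where
  "is_Delta 0 \<phi> = qfree \<phi>"
| "is_Delta (Suc n) \<phi> =
     ((\<exists>\<psi>. wf_fm \<psi> \<and> is_Sigma (Suc n) \<psi> \<and> equiv_fm \<phi> \<psi>) \<and>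
      (\<exists>\<theta>. wf_fm \<theta> \<and> is_Pi (Suc n) \<theta> \<and> equiv_fm \<phi> \<theta>))"

text \<open>f(phi) for a sentence phi (the assignment is irrelevant for sentences).\<close>

definition truth :: "(nat \<Rightarrow> nat) \<Rightarrow> fm \<Rightarrow> nat" where
  "truth f \<phi> = (if sat f (\<lambda>_. 0) \<phi> then 1 else 0)"

definition guessable :: "nat \<Rightarrow> (nat \<Rightarrow> nat) set \<Rightarrow> bool" where
  "guessable m S \<longleftrightarrow>
     (\<exists>(Sg::sym set) (phi::nat \<Rightarrow> fm) (G::nat list \<Rightarrow> nat).
        countable Sg \<and>
        range phi = {\<phi>. sentence \<phi> \<and> syms \<phi> \<subseteq> Sg \<and> is_Delta m \<phi>} \<and>
        (\<forall>f::nat \<Rightarrow> nat.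
           (\<lambda>n. G (map (\<lambda>i. truth f (phi i)) [0..<Suc n]))
             \<longlonglongrightarrow> (if f \<in> S then 1 else 0)))"

end

theory Submission
  imports Defs
begin

text \<open>The truth value of a quantifier-free sentence in \<open>\<M>\<^sub>f\<close> depends on only finitely
  many values of \<open>f\<close>, so it defines a clopen set; each quantifier adds one level, so
  \<open>\<Sigma>\<^sub>k\<close> and \<open>\<Pi>\<^sub>k\<close> sentences define \<open>\<Sigma>\<^sup>0\<^sub>k\<close> and \<open>\<Pi>\<^sup>0\<^sub>k\<close> sets, and \<open>\<Delta>\<^sub>m\<close> sentences define sets
  in the Boolean algebra of \<open>\<Delta>\<^sup>0\<^sub>m\<close> sets (of clopen sets if \<open>m = 0\<close>). The \<open>n\<close>-th guess is a
  Boolean combination of finitely many such sets, hence so is the set \<open>B\<^sub>n\<close> of all \<open>f\<close> on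
  which it equals 1. As the guesses converge, \<open>f \<in> S\<close> iff \<open>f \<in> B\<^sub>n\<close> for almost all \<open>n\<close>: \<open>S\<close> is
  both the lim inf and the lim sup of the \<open>B\<^sub>n\<close>.\<close>

section \<open>Locally constant functions on Baire space\<close>

definition locally_constant :: "((nat \<Rightarrow> nat) \<Rightarrow> 'a) \<Rightarrow> bool" where
  "locally_constant F \<longleftrightarrow> (\<forall>f. \<exists>N. \<forall>g. (\<forall>i<N. g i = f i) \<longrightarrow> F g = F f)"

lemma locally_constant_const: "locally_constant (\<lambda>g. c)"
  unfolding locally_constant_def by simp

lemma locally_constant_compose2:
  assumes "locally_constant P" and "locally_constant Q"
  shows "locally_constant (\<lambda>g. F (P g) (Q g))"
  unfolding locally_constant_def
proof
  fix f
  obtain N1 where N1: "\<forall>g. (\<forall>i<N1. g i = f i) \<longrightarrow> P g = P f"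
    using assms(1) unfolding locally_constant_def by blast
  obtain N2 where N2: "\<forall>g. (\<forall>i<N2. g i = f i) \<longrightarrow> Q g = Q f"
    using assms(2) unfolding locally_constant_def by blast
  have "F (P g) (Q g) = F (P f) (Q f)" if "\<forall>i<max N1 N2. g i = f i" for g
    using N1[rule_format, of g] N2[rule_format, of g] that by simp
  then show "\<exists>N. \<forall>g. (\<forall>i<N. g i = f i) \<longrightarrow> F (P g) (Q g) = F (P f) (Q f)"
    by blast
qed

lemma locally_constant_compose:
  "locally_constant P \<Longrightarrow> locally_constant (\<lambda>g. F (P g))"
  using locally_constant_compose2[of P P "\<lambda>x y. F x"] by simp

lemma locally_constant_map:
  "(\<And>t. t \<in> set ts \<Longrightarrow> locally_constant (\<lambda>g. h g t)) \<Longrightarrow> locally_constant (\<lambda>g. map (h g) ts)"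
proof (induction ts)
  case Nil
  then show ?case by (simp add: locally_constant_const)
next
  case (Cons t ts)
  then show ?case
    using locally_constant_compose2[of "\<lambda>g. h g t" "\<lambda>g. map (h g) ts" Cons] by simp
qed

lemma locally_constant_prefix:
  assumes "locally_constant P"
  shows "locally_constant (\<lambda>g. map g [0..<P g])"
  unfolding locally_constant_def
proof
  fix f
  obtain N where N: "\<forall>g. (\<forall>i<N. g i = f i) \<longrightarrow> P g = P f"
    using assms unfolding locally_constant_def by blast
  have "map g [0..<P g] = map f [0..<P f]" if "\<forall>i<max N (P f). g i = f i" for g
    using N[rule_format, of g] that by simp
  then show "\<exists>N. \<forall>g. (\<forall>i<N. g i = f i) \<longrightarrow> map g [0..<P g] = map f [0..<P f]"
    by blast
qed

lemma locally_constant_apply: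
  assumes "locally_constant P"
  shows "locally_constant (\<lambda>g. g (P g))"
proof -
  have "locally_constant (\<lambda>g. map g [0..<Suc (P g)])"
    using locally_constant_prefix[OF locally_constant_compose[OF assms, of Suc]] .
  then have "locally_constant (\<lambda>g. map g [0..<Suc (P g)] ! P g)"
    using assms by (rule locally_constant_compose2)
  then show ?thesis
    by (simp del: upt_Suc)
qed

lemma open_cylinder: "open {g :: nat \<Rightarrow> nat. \<forall>i<N. g i = f i}"
proof -
  have "open ((\<lambda>g :: nat \<Rightarrow> nat. g i) -` {f i})" for i
    by (rule open_vimage[OF open_discrete continuous_on_product_coordinates])
  then have "open (\<Inter>i<N. (\<lambda>g :: nat \<Rightarrow> nat. g i) -` {f i})"
    by (intro open_INT) auto
  moreover have "(\<Inter>i<N. (\<lambda>g. g i) -` {f i}) = {g. \<forall>i<N. g i = f i}"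
    by auto
  ultimately show ?thesis
    by simp
qed

lemma open_locally_constant_fibre:
  assumes "locally_constant F"
  shows "open {f. F f = c}"
proof (rule topological_space_class.openI)
  fix f assume "f \<in> {f. F f = c}"
  moreover obtain N where "\<forall>g. (\<forall>i<N. g i = f i) \<longrightarrow> F g = F f"
    using assms unfolding locally_constant_def by blast
  ultimately have "{g. \<forall>i<N. g i = f i} \<subseteq> {f. F f = c}"
    by blast
  then show "\<exists>T. open T \<and> f \<in> T \<and> T \<subseteq> {f. F f = c}"
    by (intro exI[of _ "{g. \<forall>i<N. g i = f i}"] conjI open_cylinder) simp_all
qed

lemma clopen_locally_constant:
  assumes "locally_constant P"
  shows "open {f. P f} \<and> closed {f. P f}"
proof -
  have "{f. P f = False} = - {f. P f}"
    by auto
  then show ?thesis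
    using open_locally_constant_fibre[OF assms, of True] open_locally_constant_fibre[OF assms, of False]
    by (simp add: closed_def)
qed

lemma locally_constant_fsym_interp:
  assumes "locally_constant X"
  shows "locally_constant (\<lambda>g. fsym_interp g s (X g))"
proof (cases s)
  case FSpecial
  then show ?thesis
    using locally_constant_apply[OF locally_constant_compose[OF assms, of hd]] by simp
next
  case (GFun n G)
  have "locally_constant (\<lambda>g. map g [0..<Suc (X g ! n)])"
    using locally_constant_prefix[OF locally_constant_compose[OF assms, of "\<lambda>xs. Suc (xs ! n)"]] .
  then show ?thesis
    using GFun locally_constant_compose2[OF locally_constant_compose[OF assms, of "take n"], of _ G]
    by simp
qed (simp_all add: locally_constant_const locally_constant_compose[OF assms])

lemma locally_constant_evalt: "locally_constant (\<lambda>g. evalt g e t)"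
proof (induction t)
  case (Var x)
  then show ?case by (simp add: locally_constant_const)
next
  case (App s ts)
  then have "locally_constant (\<lambda>g. map (evalt g e) ts)"
    by (rule locally_constant_map)
  then show ?case
    by (simp add: locally_constant_fsym_interp)
qed

lemma locally_constant_sat: "qfree \<phi> \<Longrightarrow> locally_constant (\<lambda>g. sat g e \<phi>)"
proof (induction \<phi>)
  case (Eq t u)
  show ?case
    using locally_constant_compose2[OF locally_constant_evalt locally_constant_evalt, of "(=)" e t e u]
    by simp
next
  case (Rel p ts)
  have "locally_constant (\<lambda>g. map (evalt g e) ts)"
    by (rule locally_constant_map) (rule locally_constant_evalt)
  then show ?case
    by (simp add: locally_constant_compose[where F = "psym_interp p"])
next
  case (Neg \<phi>)
  then show ?case using locally_constant_compose[of "\<lambda>g. sat g e \<phi>" Not] by simp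
next
  case (Conj \<phi> \<psi>)
  then show ?case using locally_constant_compose2[of "\<lambda>g. sat g e \<phi>" "\<lambda>g. sat g e \<psi>" "(\<and>)"] by simp
next
  case (Disj \<phi> \<psi>)
  then show ?case using locally_constant_compose2[of "\<lambda>g. sat g e \<phi>" "\<lambda>g. sat g e \<psi>" "(\<or>)"] by simp
next
  case (Imp \<phi> \<psi>)
  then show ?case using locally_constant_compose2[of "\<lambda>g. sat g e \<phi>" "\<lambda>g. sat g e \<psi>" "(\<longrightarrow>)"] by simp
qed simp_all

section \<open>The finite levels of the Borel hierarchy\<close>

lemma pi0_iff [simp]: "A \<in> pi0 n \<longleftrightarrow> - A \<in> sigma0 n"
  unfolding pi0_def by (auto intro: exI[of _ "- A"])

lemma sigma0_Suc_0: "sigma0 (Suc 0) = {A. open A}"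
  by simp

lemma sigma0_Suc_Suc:
  "A \<in> sigma0 (Suc (Suc k)) \<longleftrightarrow> (\<exists>B. A = (\<Union>i::nat. B i) \<and> (\<forall>i. B i \<in> pi0 (Suc k)))"
  by (simp del: sigma0.simps add: sigma0.simps(2)[of "Suc k"])

declare sigma0.simps [simp del]

lemma UN_UN_eq_UN_prod_decode: "(\<Union>i. \<Union>j. X i j) = (\<Union>n. case_prod X (prod_decode n))"
proof -
  have "(\<Union>n. case_prod X (prod_decode n)) = (\<Union>p. case_prod X p)"
    using surj_prod_decode by (metis image_image)
  then show ?thesis
    by auto
qed

lemma sigma0_lattice:
  "{} \<in> sigma0 (Suc k) \<and> UNIV \<in> sigma0 (Suc k) \<and>
   (\<forall>A\<in>sigma0 (Suc k). \<forall>B\<in>sigma0 (Suc k). A \<union> B \<in> sigma0 (Suc k) \<and> A \<inter> B \<in> sigma0 (Suc k))"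
proof (induction k)
  case 0
  then show ?case by (auto simp: sigma0_Suc_0)
next
  case (Suc k)
  then have pi0: "{} \<in> pi0 (Suc k)" "UNIV \<in> pi0 (Suc k)"
    and pi0_Un_Int: "\<And>A B. A \<in> pi0 (Suc k) \<Longrightarrow> B \<in> pi0 (Suc k) \<Longrightarrow> A \<union> B \<in> pi0 (Suc k) \<and> A \<inter> B \<in> pi0 (Suc k)"
    by auto
  have "{} \<in> sigma0 (Suc (Suc k))"
    unfolding sigma0_Suc_Suc using pi0 by (intro exI[of _ "\<lambda>_. {}"]) simp
  moreover have "UNIV \<in> sigma0 (Suc (Suc k))"
    unfolding sigma0_Suc_Suc using pi0 by (intro exI[of _ "\<lambda>_. UNIV"]) simp
  moreover have "A \<union> B \<in> sigma0 (Suc (Suc k)) \<and> A \<inter> B \<in> sigma0 (Suc (Suc k))"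
    if A: "A \<in> sigma0 (Suc (Suc k))" and B: "B \<in> sigma0 (Suc (Suc k))" for A B
  proof -
    obtain A' B' :: "nat \<Rightarrow> (nat \<Rightarrow> nat) set"
      where A': "A = (\<Union>i. A' i)" "\<And>i. A' i \<in> pi0 (Suc k)"
        and B': "B = (\<Union>i. B' i)" "\<And>i. B' i \<in> pi0 (Suc k)"
      using A B unfolding sigma0_Suc_Suc by metis
    have "A \<union> B = (\<Union>i. A' i \<union> B' i)"
      using A' B' by auto
    moreover have "A \<inter> B = (\<Union>n. case_prod (\<lambda>i j. A' i \<inter> B' j) (prod_decode n))"
      unfolding A' B' UN_UN_eq_UN_prod_decode[symmetric] by blast
    moreover have "A' i \<union> B' i \<in> pi0 (Suc k)" "case_prod (\<lambda>i j. A' i \<inter> B' j) p \<in> pi0 (Suc k)" for i p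
      using A'(2) B'(2) pi0_Un_Int by (auto split: prod.split)
    ultimately show ?thesis
      unfolding sigma0_Suc_Suc by blast
  qed
  ultimately show ?case
    by blast
qed

lemma algebra_delta0: "algebra UNIV (delta0 (Suc k))"
  unfolding algebra_iff_Un delta0_def using sigma0_lattice[of k]
  by (auto simp: Compl_eq_Diff_UNIV[symmetric])

lemma algebra_clopen: "algebra UNIV {A. open A \<and> closed A}"
  unfolding algebra_iff_Un by (auto simp: open_Diff closed_Diff)

lemma union_of_inters_mono: "C \<subseteq> D \<Longrightarrow> union_of_inters C \<subseteq> union_of_inters D"
  unfolding union_of_inters_def by blast

lemma inter_of_unions_mono: "C \<subseteq> D \<Longrightarrow> inter_of_unions C \<subseteq> inter_of_unions D"
  unfolding inter_of_unions_def by blast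

lemma union_of_inters_closed_subset_sigma0_2: "union_of_inters {A. closed A} \<subseteq> sigma0 2"
proof
  fix S :: "(nat \<Rightarrow> nat) set"
  assume "S \<in> union_of_inters {A. closed A}"
  then obtain A :: "nat \<Rightarrow> nat \<Rightarrow> _" where "S = (\<Union>i. \<Inter>j. A i j)" "\<And>i j. closed (A i j)"
    unfolding union_of_inters_def by auto
  then show "S \<in> sigma0 2"
    unfolding numeral_2_eq_2 sigma0_Suc_Suc pi0_iff sigma0_Suc_0
    by (intro exI[of _ "\<lambda>i. \<Inter>j. A i j"]) auto
qed

lemma inter_of_unions_open_subset_pi0_2: "inter_of_unions {A. open A} \<subseteq> pi0 2"
proof
  fix S :: "(nat \<Rightarrow> nat) set"
  assume "S \<in> inter_of_unions {A. open A}"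
  then obtain A :: "nat \<Rightarrow> nat \<Rightarrow> _" where "S = (\<Inter>i. \<Union>j. A i j)" "\<And>i j. open (A i j)"
    unfolding inter_of_unions_def by auto
  then have "- S = (\<Union>i. \<Inter>j. - A i j)" "\<And>i j. closed (- A i j)"
    by (simp_all add: closed_Compl)
  then have "- S \<in> union_of_inters {A. closed A}"
    unfolding union_of_inters_def by (intro CollectI exI[of _ "\<lambda>i j. - A i j"]) simp
  then show "S \<in> pi0 2"
    using subsetD[OF union_of_inters_closed_subset_sigma0_2] by simp
qed

lemma delta'_2I:
  assumes "S \<in> union_of_inters {A. open A \<and> closed A}" and "S \<in> inter_of_unions {A. open A \<and> closed A}"
  shows "S \<in> delta' 2"
proof -
  have "S \<in> union_of_inters {A. closed A}" "S \<in> inter_of_unions {A. open A}"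
    using assms union_of_inters_mono[of "{A. open A \<and> closed A}" "{A. closed A}"]
      inter_of_unions_mono[of "{A. open A \<and> closed A}" "{A. open A}"] by blast+
  then have "S \<in> sigma0 2" "S \<in> pi0 2"
    using union_of_inters_closed_subset_sigma0_2 inter_of_unions_open_subset_pi0_2 by blast+
  then show ?thesis
    by (simp add: delta'_def delta0_def)
qed

section \<open>Sets defined by sentences\<close>

lemma sat_Sigma_Pi_sets:
  "(is_Sigma (Suc k) \<psi> \<longrightarrow> {f. sat f e \<psi>} \<in> sigma0 (Suc k)) \<and>
   (is_Pi (Suc k) \<psi> \<longrightarrow> {f. sat f e \<psi>} \<in> pi0 (Suc k))"
proof (induction k arbitrary: \<psi> e)
  case 0
  have "open {f. sat f e (Ex x \<phi>)}" "closed {f. sat f e (All x \<phi>)}" if "qfree \<phi>" for x \<phi>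
    using clopen_locally_constant[OF locally_constant_sat[OF that]]
    by (auto intro: open_Collect_ex closed_Collect_all)
  then show ?case
    by (auto simp: sigma0_Suc_0 closed_def)
next
  case (Suc k)
  show ?case
  proof (intro conjI impI)
    assume "is_Sigma (Suc (Suc k)) \<psi>"
    then obtain x \<phi> where "\<psi> = Ex x \<phi>" "is_Pi (Suc k) \<phi>"
      by auto
    moreover have "{f. sat f e (Ex x \<phi>)} = (\<Union>a. {f. sat f (e(x := a)) \<phi>})"
      by auto
    ultimately show "{f. sat f e \<psi>} \<in> sigma0 (Suc (Suc k))"
      unfolding sigma0_Suc_Suc using Suc.IH by blast
  next
    assume "is_Pi (Suc (Suc k)) \<psi>"
    then obtain x \<phi> where "\<psi> = All x \<phi>" "is_Sigma (Suc k) \<phi>"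
      by auto
    moreover have "- {f. sat f e (All x \<phi>)} = (\<Union>a. - {f. sat f (e(x := a)) \<phi>})"
      by auto
    moreover have "- {f. sat f (e(x := a)) \<phi>} \<in> pi0 (Suc k)" for a
      using Suc.IH \<open>is_Sigma (Suc k) \<phi>\<close> by (simp only: pi0_iff double_complement)
    ultimately show "{f. sat f e \<psi>} \<in> pi0 (Suc (Suc k))"
      unfolding pi0_iff sigma0_Suc_Suc by blast
  qed
qed

definition clopen_or_delta0 :: "nat \<Rightarrow> (nat \<Rightarrow> nat) set set" where
  "clopen_or_delta0 m = (if m = 0 then {A. open A \<and> closed A} else delta0 m)"

lemma algebra_clopen_or_delta0: "algebra UNIV (clopen_or_delta0 m)"
  by (cases m) (simp_all add: clopen_or_delta0_def algebra_clopen algebra_delta0)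

lemma sat_Delta_sets:
  assumes "is_Delta m \<phi>"
  shows "{f. sat f e \<phi>} \<in> clopen_or_delta0 m"
proof (cases m)
  case 0
  then show ?thesis
    using assms clopen_locally_constant[OF locally_constant_sat] by (simp add: clopen_or_delta0_def)
next
  case (Suc k)
  then obtain \<psi> \<theta> where "is_Sigma (Suc k) \<psi>" "equiv_fm \<phi> \<psi>" "is_Pi (Suc k) \<theta>" "equiv_fm \<phi> \<theta>"
    using assms by auto
  then show ?thesis
    using Suc sat_Sigma_Pi_sets[of k \<psi> e] sat_Sigma_Pi_sets[of k \<theta> e]
    by (simp add: clopen_or_delta0_def delta0_def equiv_fm_def)
qed

section \<open>Guessable sets\<close>

lemma (in algebra) sets_Collect_list_combination:
  assumes "\<And>i. {x\<in>\<Omega>. T x i} \<in> M"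
  shows "{x\<in>\<Omega>. P (map (T x) [0..<k])} \<in> M"
proof (induction k arbitrary: P)
  case 0
  show ?case using sets_Collect_const by simp
next
  case (Suc k)
  have "P (map (T x) [0..<Suc k]) \<longleftrightarrow>
      (T x k \<and> P (map (T x) [0..<k] @ [True])) \<or> (\<not> T x k \<and> P (map (T x) [0..<k] @ [False]))" for x
    by (cases "T x k") simp_all
  then have "{x\<in>\<Omega>. P (map (T x) [0..<Suc k])} =
      {x\<in>\<Omega>. (T x k \<and> P (map (T x) [0..<k] @ [True])) \<or> (\<not> T x k \<and> P (map (T x) [0..<k] @ [False]))}"
    by simp
  also have "\<dots> \<in> M"
    using Suc[of "\<lambda>bs. P (bs @ [True])"] Suc[of "\<lambda>bs. P (bs @ [False])"] assms[of k]
    by (intro sets_Collect_disj sets_Collect_conj sets_Collect_neg)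
  finally show ?case .
qed

lemma union_of_inters_if_eventually_mem:
  assumes "\<And>n. B n \<in> C" and "\<And>x. \<forall>\<^sub>F n in sequentially. x \<in> B n \<longleftrightarrow> x \<in> S"
  shows "S \<in> union_of_inters C"
proof -
  have "S = (\<Union>i. \<Inter>j. B (i + j))"
  proof (intro set_eqI)
    fix x
    obtain N where N: "\<And>n. n \<ge> N \<Longrightarrow> x \<in> B n \<longleftrightarrow> x \<in> S"
      using assms(2)[of x] unfolding eventually_sequentially by blast
    show "x \<in> S \<longleftrightarrow> x \<in> (\<Union>i. \<Inter>j. B (i + j))"
    proof
      assume "x \<in> S"
      then have "x \<in> (\<Inter>j. B (N + j))"
        using N by simp
      then show "x \<in> (\<Union>i. \<Inter>j. B (i + j))"
        by blast
    next
      assume "x \<in> (\<Union>i. \<Inter>j. B (i + j))"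
      then obtain i where "x \<in> B (i + N)"
        by blast
      then show "x \<in> S"
        using N by simp
    qed
  qed
  then show ?thesis
    unfolding union_of_inters_def using assms(1) by (intro CollectI exI[of _ "\<lambda>i j. B (i + j)"]) simp
qed

lemma inter_of_unions_if_eventually_mem:
  assumes "\<And>n. B n \<in> C" and "\<And>x. \<forall>\<^sub>F n in sequentially. x \<in> B n \<longleftrightarrow> x \<in> S"
  shows "S \<in> inter_of_unions C"
proof -
  have "S = (\<Inter>i. \<Union>j. B (i + j))"
  proof (intro set_eqI)
    fix x
    obtain N where N: "\<And>n. n \<ge> N \<Longrightarrow> x \<in> B n \<longleftrightarrow> x \<in> S"
      using assms(2)[of x] unfolding eventually_sequentially by blast
    show "x \<in> S \<longleftrightarrow> x \<in> (\<Inter>i. \<Union>j. B (i + j))"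
    proof
      assume "x \<in> S"
      then have "x \<in> B (i + N)" for i
        using N by simp
      then show "x \<in> (\<Inter>i. \<Union>j. B (i + j))"
        by blast
    next
      assume "x \<in> (\<Inter>i. \<Union>j. B (i + j))"
      then obtain j where "x \<in> B (N + j)"
        by blast
      then show "x \<in> S"
        using N by simp
    qed
  qed
  then show ?thesis
    unfolding inter_of_unions_def using assms(1) by (intro CollectI exI[of _ "\<lambda>i j. B (i + j)"]) simp
qed

lemma guessable_eventually_approximated:
  assumes "guessable m S"
  obtains B where "\<And>n. B n \<in> clopen_or_delta0 m"
    and "\<And>f. \<forall>\<^sub>F n in sequentially. f \<in> B n \<longleftrightarrow> f \<in> S"
proof -
  obtain Sg phi and G :: "nat list \<Rightarrow> nat" where phi: "range phi = {\<phi>. sentence \<phi> \<and> syms \<phi> \<subseteq> Sg \<and> is_Delta m \<phi>}"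
    and guess: "\<And>f. (\<lambda>n. G (map (\<lambda>i. truth f (phi i)) [0..<Suc n])) \<longlonglongrightarrow> (if f \<in> S then 1 else 0)"
    using assms unfolding guessable_def by iprover
  define B where "B n = {f. G (map (\<lambda>i. truth f (phi i)) [0..<Suc n]) = 1}" for n
  have "B n \<in> clopen_or_delta0 m" for n
  proof -
    interpret algebra UNIV "clopen_or_delta0 m"
      by (rule algebra_clopen_or_delta0)
    have "phi i \<in> range phi" for i
      by (rule rangeI)
    then have "{f. sat f (\<lambda>_. 0) (phi i)} \<in> clopen_or_delta0 m" for i
      unfolding phi by (intro sat_Delta_sets) simp
    then have "{f \<in> UNIV. (\<lambda>bs. G (map (\<lambda>b. if b then 1 else 0) bs) = 1)
        (map (\<lambda>i. sat f (\<lambda>_. 0) (phi i)) [0..<Suc n])} \<in> clopen_or_delta0 m"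
      by (intro sets_Collect_list_combination) simp
    then show ?thesis
      by (simp add: B_def truth_def comp_def)
  qed
  moreover have "\<forall>\<^sub>F n in sequentially. f \<in> B n \<longleftrightarrow> f \<in> S" for f
    using guess[of f, unfolded tendsto_discrete] by (rule eventually_mono) (simp add: B_def)
  ultimately show ?thesis
    using that by blast
qed

theorem mainTheorem11:
  fixes m :: nat and S :: "(nat \<Rightarrow> nat) set"
  assumes "guessable m S"
  shows "S \<in> delta' (m + 2) \<and>
         S \<in> union_of_inters (if m = 0 then {A. open A \<and> closed A} else delta0 m) \<and>
         S \<in> inter_of_unions (if m = 0 then {A. open A \<and> closed A} else delta0 m)"
proof -
  obtain B where "\<And>n. B n \<in> clopen_or_delta0 m"
    and "\<And>f. \<forall>\<^sub>F n in sequentially. f \<in> B n \<longleftrightarrow> f \<in> S"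
    using guessable_eventually_approximated[OF assms] by metis
  then have U: "S \<in> union_of_inters (clopen_or_delta0 m)"
    and I: "S \<in> inter_of_unions (clopen_or_delta0 m)"
    by (rule union_of_inters_if_eventually_mem, rule inter_of_unions_if_eventually_mem)
  moreover have "S \<in> delta' (m + 2)"
  proof (cases "m = 0")
    case True
    then have "S \<in> delta' 2"
      using U I by (intro delta'_2I) (simp_all add: clopen_or_delta0_def)
    with True show ?thesis
      by (simp add: numeral_2_eq_2)
  next
    case False
    with U I show ?thesis
      by (simp add: delta'_def clopen_or_delta0_def)
  qed
  ultimately show ?thesis
    by (simp add: clopen_or_delta0_def)
qed

end
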